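(* Let $Q$ be a quiver, $\mathcal A=\Lambda Q/\langle P_1,\dots,P_K\rangle$ a completed path algebra with relations, $G$ a finite group with a formal dual group action $\mathfrak f$ on $\mathcal A$, and $W\in\mathcal A$ invariant under the formal dual group action. Let $\hat{\mathcal A}=\Lambda(Q\# G)/\langle P_i^g: g\in G,\ i=1,\dots,K\rangle$ and $\hat W=\sum_{g\in G}W^g$. If $W$ is a central element of $\mathcal A$, then $\hat W$ is a central element of $\hat{\mathcal A}$.
   Context: Paths are written right to left ($x_p\cdots x_1$ means first $x_1$). A formal dual group action is a function $\mathfrak f$ from the arrows of $Q$ to $G$ such that, for each $l$, all paths occurring in $P_l$ have the same image $g_l$, where a path $x_p\cdots x_1$ is mapped to $\mathfrak f(x_1)\cdots\mathfrak f(x_p)$. $W$ is invariant if it has a representative in $\Lambda Q$ all of whose terms map to $1$; this representative is used to define $W^g$. The quiver $Q\# G$ has vertices $v^g$ for $v$ a vertex of $Q$ and $g\in G$, and for each arrow $x:u\to v$ of $Q$ and each $h\in G$ an arrow $x^h$ from $u^h$ to $v^{h\mathfrak f(x)}$. The lift of a path $x_k\cdots x_1$ of $Q$ by $g\in G$ is the path $x_k^{g_k}\cdots x_1^{g_1}$ of $Q\#G$ with $g_1=g$ and $g_{i+1}=g_i\mathfrak f(x_i)$ (a trivial path $\pi_v$ lifts to $\pi_{v^g}$); extended linearly this gives $\Lambda Q\to\Lambda(Q\#G)$, $P\mapsto P^g$. The ideals are completed two-sided ideals. *)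

theory Defs
  imports "HOL-Algebra.Group"
begin

text \<open>A path is a pair (v, [x1, ..., xp]) : start vertex v and the arrows in the order
  they are traversed (x1 first); in the paper's right-to-left notation this is
  the path xp ... x1.\<close>

fun chain :: "('a \<Rightarrow> 'v) \<Rightarrow> ('a \<Rightarrow> 'v) \<Rightarrow> 'v \<Rightarrow> 'a list \<Rightarrow> bool" where
  "chain src tgt v [] = True"
| "chain src tgt v (x # xs) = (src x = v \<and> chain src tgt (tgt x) xs)"

definition is_path :: "'v set \<Rightarrow> 'a set \<Rightarrow> ('a \<Rightarrow> 'v) \<Rightarrow> ('a \<Rightarrow> 'v) \<Rightarrow> 'v \<times> 'a list \<Rightarrow> bool" where
  "is_path V E src tgt p \<longleftrightarrow> fst p \<in> V \<and> set (snd p) \<subseteq> E \<and> chain src tgt (fst p) (snd p)"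

definition path_end :: "('a \<Rightarrow> 'v) \<Rightarrow> 'v \<times> 'a list \<Rightarrow> 'v" where
  "path_end tgt p = (if snd p = [] then fst p else tgt (last (snd p)))"

text \<open>Completed path algebra: arbitrary (possibly infinite) formal k-linear
  combinations of paths, i.e. coefficient functions supported on paths.\<close>

definition cpa :: "'v set \<Rightarrow> 'a set \<Rightarrow> ('a \<Rightarrow> 'v) \<Rightarrow> ('a \<Rightarrow> 'v) \<Rightarrow> ('v \<times> 'a list \<Rightarrow> 'k::zero) set" where
  "cpa V E src tgt = {F. \<forall>p. \<not> is_path V E src tgt p \<longrightarrow> F p = 0}"

text \<open>Multiplication: F * H is concatenation "F after H" (H is traversed first),
  matching the convention that x_p ... x_1 is the product of arrows.\<close>

definition cpa_mult :: "('a \<Rightarrow> 'v) \<Rightarrow> ('v \<times> 'a list \<Rightarrow> 'k::comm_ring_1)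
      \<Rightarrow> ('v \<times> 'a list \<Rightarrow> 'k) \<Rightarrow> ('v \<times> 'a list \<Rightarrow> 'k)" where
  "cpa_mult tgt F H = (\<lambda>p. \<Sum>i\<le>length (snd p).
      F (path_end tgt (fst p, take i (snd p)), drop i (snd p)) * H (fst p, take i (snd p)))"

inductive_set gen_ideal :: "'v set \<Rightarrow> 'a set \<Rightarrow> ('a \<Rightarrow> 'v) \<Rightarrow> ('a \<Rightarrow> 'v)
    \<Rightarrow> ('v \<times> 'a list \<Rightarrow> 'k::comm_ring_1) set \<Rightarrow> ('v \<times> 'a list \<Rightarrow> 'k) set"
  for V E src tgt S where
  zero: "(\<lambda>_. 0) \<in> gen_ideal V E src tgt S"
| gen: "r \<in> S \<Longrightarrow> a \<in> cpa V E src tgt \<Longrightarrow> b \<in> cpa V E src tgt \<Longrightarrow>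
        cpa_mult tgt a (cpa_mult tgt r b) \<in> gen_ideal V E src tgt S"
| add: "x \<in> gen_ideal V E src tgt S \<Longrightarrow> y \<in> gen_ideal V E src tgt S \<Longrightarrow>
        (\<lambda>p. x p + y p) \<in> gen_ideal V E src tgt S"

text \<open>Completed two-sided ideal: the closure of the generated ideal in the
  arrow-ideal-adic topology, i.e. the intersection over n of (I + m^n), where m^n
  consists of the elements supported on paths of length at least n.\<close>

definition closed_ideal :: "'v set \<Rightarrow> 'a set \<Rightarrow> ('a \<Rightarrow> 'v) \<Rightarrow> ('a \<Rightarrow> 'v)
    \<Rightarrow> ('v \<times> 'a list \<Rightarrow> 'k::comm_ring_1) set \<Rightarrow> ('v \<times> 'a list \<Rightarrow> 'k) set" where
  "closed_ideal V E src tgt S = {X \<in> cpa V E src tgt.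
      \<forall>n. \<exists>Y \<in> gen_ideal V E src tgt S. \<forall>p. length (snd p) < n \<longrightarrow> X p = Y p}"

definition central_mod :: "'v set \<Rightarrow> 'a set \<Rightarrow> ('a \<Rightarrow> 'v) \<Rightarrow> ('a \<Rightarrow> 'v)
    \<Rightarrow> ('v \<times> 'a list \<Rightarrow> 'k::comm_ring_1) set \<Rightarrow> ('v \<times> 'a list \<Rightarrow> 'k) \<Rightarrow> bool" where
  "central_mod V E src tgt S W \<longleftrightarrow> W \<in> cpa V E src tgt \<and>
     (\<forall>X \<in> cpa V E src tgt.
        (\<lambda>p. cpa_mult tgt W X p - cpa_mult tgt X W p) \<in> closed_ideal V E src tgt S)"

text \<open>Image of the path x_p ... x_1 (list [x1,...,xp]) is f(x1) ... f(xp).\<close>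

definition path_img :: "('g, 'b) monoid_scheme \<Rightarrow> ('a \<Rightarrow> 'g) \<Rightarrow> 'a list \<Rightarrow> 'g" where
  "path_img G f xs = foldr (\<lambda>x acc. f x \<otimes>\<^bsub>G\<^esub> acc) xs \<one>\<^bsub>G\<^esub>"

definition formal_dual_action :: "('g, 'b) monoid_scheme \<Rightarrow> 'a set \<Rightarrow> ('a \<Rightarrow> 'g)
    \<Rightarrow> (nat \<Rightarrow> 'v \<times> 'a list \<Rightarrow> 'k::zero) \<Rightarrow> nat \<Rightarrow> bool" where
  "formal_dual_action G E f P K \<longleftrightarrow> (\<forall>x\<in>E. f x \<in> carrier G) \<and>
     (\<forall>l\<in>{1..K}. \<exists>g\<in>carrier G. \<forall>p. P l p \<noteq> 0 \<longrightarrow> path_img G f (snd p) = g)"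

definition invariant_rep :: "('g, 'b) monoid_scheme \<Rightarrow> ('a \<Rightarrow> 'g)
    \<Rightarrow> ('v \<times> 'a list \<Rightarrow> 'k::zero) \<Rightarrow> bool" where
  "invariant_rep G f W \<longleftrightarrow> (\<forall>p. W p \<noteq> 0 \<longrightarrow> path_img G f (snd p) = \<one>\<^bsub>G\<^esub>)"

text \<open>Skew quiver Q#G: vertices V x G, arrows E x G, arrow x^h : u^h \<rightarrow> v^(h f(x)).\<close>

definition sk_src :: "('a \<Rightarrow> 'v) \<Rightarrow> 'a \<times> 'g \<Rightarrow> 'v \<times> 'g" where
  "sk_src src y = (src (fst y), snd y)"

definition sk_tgt :: "('g, 'b) monoid_scheme \<Rightarrow> ('a \<Rightarrow> 'v) \<Rightarrow> ('a \<Rightarrow> 'g) \<Rightarrow> 'a \<times> 'g \<Rightarrow> 'v \<times> 'g" where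
  "sk_tgt G tgt f y = (tgt (fst y), snd y \<otimes>\<^bsub>G\<^esub> f (fst y))"

fun lift_list :: "('g, 'b) monoid_scheme \<Rightarrow> ('a \<Rightarrow> 'g) \<Rightarrow> 'g \<Rightarrow> 'a list \<Rightarrow> ('a \<times> 'g) list" where
  "lift_list G f g [] = []"
| "lift_list G f g (x # xs) = (x, g) # lift_list G f (g \<otimes>\<^bsub>G\<^esub> f x) xs"

text \<open>P^g: linear (infinite-sum) extension of the lift of paths by g; since lifting
  by g is injective on paths, the coefficient of a path of Q#G is the coefficient
  of its projection if it is the lift by g of that projection, and 0 otherwise.\<close>

definition lift :: "('g, 'b) monoid_scheme \<Rightarrow> ('a \<Rightarrow> 'g) \<Rightarrow> 'g
    \<Rightarrow> ('v \<times> 'a list \<Rightarrow> 'k::zero) \<Rightarrow> ('v \<times> 'g) \<times> ('a \<times> 'g) list \<Rightarrow> 'k" where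
  "lift G f g P = (\<lambda>q. if snd (fst q) = g \<and> snd q = lift_list G f g (map fst (snd q))
                       then P (fst (fst q), map fst (snd q)) else 0)"

definition hat_sum :: "('g, 'b) monoid_scheme \<Rightarrow> ('a \<Rightarrow> 'g)
    \<Rightarrow> ('v \<times> 'a list \<Rightarrow> 'k::comm_monoid_add) \<Rightarrow> ('v \<times> 'g) \<times> ('a \<times> 'g) list \<Rightarrow> 'k" where
  "hat_sum G f W = (\<lambda>q. \<Sum>g\<in>carrier G. lift G f g W q)"

end

theory Submission
  imports Defs
begin

text \<open>Every path of the skew quiver \<open>Q#G\<close> is the lift of its projection to \<open>Q\<close> by the
  group label of its start vertex, so an element of the completed path algebra of \<open>Q#G\<close> is
  a finite sum of lifts \<open>Y\<^sup>g\<close>, one for each sheet \<open>g\<close>.  Lifting is multiplicative on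
  homogeneous elements: \<open>A\<^sup>g' B\<^sup>g = (AB)\<^sup>g\<close> if \<open>B\<close> has degree \<open>h\<close> and \<open>g' = gh\<close>, and the product
  vanishes otherwise.  Hence \<open>\<hat>W Y\<^sup>g = (WY)\<^sup>g\<close>, and, because \<open>W\<close> has degree \<open>1\<close>, also
  \<open>Y\<^sup>g \<hat>W = (YW)\<^sup>g\<close>; so the commutator of \<open>\<hat>W\<close> with \<open>\<Sum>\<^sub>g Y\<^sup>g\<close> is \<open>\<Sum>\<^sub>g [W,Y]\<^sup>g\<close>.  Finally, lifting
  maps the ideal generated by the \<open>P\<^sub>l\<close> into the ideal generated by the \<open>P\<^sub>l\<^sup>g\<close>: splitting the
  right factor of a generator term \<open>a P\<^sub>l b\<close> into homogeneous components \<open>b\<^sub>h\<close> gives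
  \<open>(a P\<^sub>l b\<^sub>h)\<^sup>g = a\<^sup>g\<^sup>h\<^sup>k P\<^sub>l\<^sup>g\<^sup>h b\<^sub>h\<^sup>g\<close>, where \<open>k\<close> is the degree of \<open>P\<^sub>l\<close>.\<close>

definition lift_end :: "('g, 'b) monoid_scheme \<Rightarrow> ('a \<Rightarrow> 'g) \<Rightarrow> 'g \<Rightarrow> 'a list \<Rightarrow> 'g" where
  "lift_end G f g xs = fold (\<lambda>x acc. acc \<otimes>\<^bsub>G\<^esub> f x) xs g"

lemma lift_end_Nil [simp]: "lift_end G f g [] = g"
  and lift_end_Cons [simp]: "lift_end G f g (x # xs) = lift_end G f (g \<otimes>\<^bsub>G\<^esub> f x) xs"
  by (simp_all add: lift_end_def)

lemma map_fst_lift_list [simp]: "map fst (lift_list G f g xs) = xs"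
  by (induction xs arbitrary: g) auto

lemma length_lift_list [simp]: "length (lift_list G f g xs) = length xs"
  by (induction xs arbitrary: g) auto

lemma lift_list_append:
  "lift_list G f g (xs @ ys) = lift_list G f g xs @ lift_list G f (lift_end G f g xs) ys"
  by (induction xs arbitrary: g) auto

lemma take_lift_list: "take i (lift_list G f g xs) = lift_list G f g (take i xs)"
  by (induction xs arbitrary: g i) (auto simp: take_Cons split: nat.split)

lemma drop_lift_list:
  "drop i (lift_list G f g xs) = lift_list G f (lift_end G f g (take i xs)) (drop i xs)"
  by (induction xs arbitrary: g i) (auto simp: drop_Cons split: nat.split)

lemma lift_list_take_drop_iff:
  "ys = lift_list G f g (map fst ys) \<longleftrightarrow>
     take i ys = lift_list G f g (map fst (take i ys)) \<and>
     drop i ys = lift_list G f (lift_end G f g (map fst (take i ys))) (map fst (drop i ys))"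
proof -
  have split: "lift_list G f g (map fst ys) = lift_list G f g (map fst (take i ys)) @
      lift_list G f (lift_end G f g (map fst (take i ys))) (map fst (drop i ys))"
    by (metis append_take_drop_id lift_list_append map_append)
  show ?thesis
    by (subst split, subst (1) append_take_drop_id[of i ys, symmetric],
        subst append_eq_append_conv) simp_all
qed

lemma sk_src_simp [simp]: "sk_src src (x, h) = (src x, h)"
  by (simp add: sk_src_def)

lemma sk_tgt_simp [simp]: "sk_tgt G tgt f (x, h) = (tgt x, h \<otimes>\<^bsub>G\<^esub> f x)"
  by (simp add: sk_tgt_def)

lemma path_end_lift_list:
  "path_end (sk_tgt G tgt f) ((v, g), lift_list G f g xs) = (path_end tgt (v, xs), lift_end G f g xs)"
proof (induction xs arbitrary: v g)
  case Nil
  then show ?case by (simp add: path_end_def)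
next
  case (Cons x xs)
  show ?case
  proof (cases "xs = []")
    case False
    then have "lift_list G f (g \<otimes>\<^bsub>G\<^esub> f x) xs \<noteq> []"
      by (metis length_0_conv length_lift_list)
    with False Cons.IH[of "tgt x" "g \<otimes>\<^bsub>G\<^esub> f x"] show ?thesis
      by (simp add: path_end_def)
  qed (simp add: path_end_def)
qed

lemma chain_lift_list:
  "chain (sk_src src) (sk_tgt G tgt f) (v, g) (lift_list G f g xs) = chain src tgt v xs"
  by (induction xs arbitrary: v g) auto

lemma chain_imp_lift_list:
  "chain (sk_src src) (sk_tgt G tgt f) (v, g) ys \<Longrightarrow> ys = lift_list G f g (map fst ys)"
proof (induction ys arbitrary: v g)
  case (Cons y ys)
  then show ?case by (cases y) auto
qed simp

lemma lift_apply:
  "lift G f g A ((v, g0), ys) =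
     (if g0 = g \<and> ys = lift_list G f g (map fst ys) then A (v, map fst ys) else 0)"
  by (simp add: lift_def)

definition lifted_support ::
    "('g, 'b) monoid_scheme \<Rightarrow> ('a \<Rightarrow> 'g) \<Rightarrow> (('v \<times> 'g) \<times> ('a \<times> 'g) list \<Rightarrow> 'k::zero) \<Rightarrow> bool" where
  "lifted_support G f F \<longleftrightarrow> (\<forall>q. F q \<noteq> 0 \<longrightarrow> snd q = lift_list G f (snd (fst q)) (map fst (snd q)))"

lemma lifted_support_lift: "lifted_support G f (lift G f g A)"
  by (simp add: lifted_support_def lift_def)

lemma lifted_support_hat_sum: "lifted_support G f (hat_sum G f A)"
  unfolding lifted_support_def hat_sum_def
proof (intro allI impI)
  fix q
  assume "(\<Sum>g\<in>carrier G. lift G f g A q) \<noteq> 0"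
  then obtain g where "lift G f g A q \<noteq> 0"
    by (meson sum.neutral)
  then show "snd q = lift_list G f (snd (fst q)) (map fst (snd q))"
    by (simp add: lift_def split: if_splits)
qed

lemma cpa_mult_lift_right:
  assumes F: "lifted_support G f F"
  shows "cpa_mult (sk_tgt G tgt f) F (lift G f g B) ((v, g0), ys) =
    (if g0 = g \<and> ys = lift_list G f g (map fst ys) then
       (\<Sum>i\<le>length ys.
          F ((path_end tgt (v, take i (map fst ys)), lift_end G f g (take i (map fst ys))),
             lift_list G f (lift_end G f g (take i (map fst ys))) (drop i (map fst ys)))
          * B (v, take i (map fst ys)))
     else 0)"
proof (cases "g0 = g \<and> ys = lift_list G f g (map fst ys)")
  case True
  then have "ys = lift_list G f g (map fst ys)" by simp
  then obtain xs where "ys = lift_list G f g xs" by blast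
  with True show ?thesis
    by (simp add: cpa_mult_def take_lift_list drop_lift_list path_end_lift_list lift_def)
next
  case not_lift: False
  have "F (path_end (sk_tgt G tgt f) ((v, g0), take i ys), drop i ys)
          * lift G f g B ((v, g0), take i ys) = 0" for i
  proof (cases "g0 = g \<and> take i ys = lift_list G f g (map fst (take i ys))")
    case True
    define xs where "xs = map fst (take i ys)"
    text \<open>The prefix of \<open>ys\<close> is a lift, so the suffix is not, and \<open>F\<close> vanishes on it.\<close>
    have "drop i ys \<noteq> lift_list G f (lift_end G f g xs) (map fst (drop i ys))"
      using not_lift True lift_list_take_drop_iff[of ys G f g i] unfolding xs_def by blast
    moreover have "path_end (sk_tgt G tgt f) ((v, g), take i ys) = (path_end tgt (v, xs), lift_end G f g xs)"
      using True by (metis path_end_lift_list xs_def)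
    ultimately have "F (path_end (sk_tgt G tgt f) ((v, g0), take i ys), drop i ys) = 0"
      using F True unfolding lifted_support_def by force
    then show ?thesis by simp
  qed (auto simp: lift_def)
  then have "cpa_mult (sk_tgt G tgt f) F (lift G f g B) ((v, g0), ys) = 0"
    by (simp add: cpa_mult_def)
  then show ?thesis
    by (simp only: if_not_P[OF not_lift])
qed

lemma path_img_Nil [simp]: "path_img G f [] = \<one>\<^bsub>G\<^esub>"
  and path_img_Cons [simp]: "path_img G f (x # xs) = f x \<otimes>\<^bsub>G\<^esub> path_img G f xs"
  by (simp_all add: path_img_def)

definition homogeneous ::
    "('g, 'b) monoid_scheme \<Rightarrow> ('a \<Rightarrow> 'g) \<Rightarrow> ('v \<times> 'a list \<Rightarrow> 'k::zero) \<Rightarrow> 'g \<Rightarrow> bool" where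
  "homogeneous G f B h \<longleftrightarrow>
     (\<forall>p. B p \<noteq> 0 \<longrightarrow> (\<forall>x\<in>set (snd p). f x \<in> carrier G) \<and> path_img G f (snd p) = h)"

lemma cpa_mult_sum_right:
  "cpa_mult tgt F (\<lambda>p. \<Sum>k\<in>A. B k p) = (\<lambda>p. \<Sum>k\<in>A. cpa_mult tgt F (B k) p)"
  unfolding cpa_mult_def by (rule ext) (simp add: sum_distrib_left sum.swap[of _ A])

lemma cpa_mult_sum_left:
  "cpa_mult tgt (\<lambda>p. \<Sum>k\<in>A. F k p) B = (\<lambda>p. \<Sum>k\<in>A. cpa_mult tgt (F k) B p)"
  unfolding cpa_mult_def by (rule ext) (simp add: sum_distrib_right sum.swap[of _ A])

context monoid
begin

lemma path_img_closed: "\<forall>x\<in>set xs. f x \<in> carrier G \<Longrightarrow> path_img G f xs \<in> carrier G"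
  by (induction xs) auto

lemma path_img_append:
  assumes "\<forall>x\<in>set xs. f x \<in> carrier G" and "\<forall>x\<in>set ys. f x \<in> carrier G"
  shows "path_img G f (xs @ ys) = path_img G f xs \<otimes> path_img G f ys"
  using assms by (induction xs) (auto simp: path_img_closed m_assoc)

lemma lift_end_eq_mult_path_img:
  "g \<in> carrier G \<Longrightarrow> \<forall>x\<in>set xs. f x \<in> carrier G \<Longrightarrow> lift_end G f g xs = g \<otimes> path_img G f xs"
  by (induction xs arbitrary: g) (auto simp: path_img_closed m_assoc)

lemma lift_end_closed:
  "g \<in> carrier G \<Longrightarrow> \<forall>x\<in>set xs. f x \<in> carrier G \<Longrightarrow> lift_end G f g xs \<in> carrier G"
  by (simp add: lift_end_eq_mult_path_img path_img_closed)

lemma cpa_mult_lift_lift: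
  fixes tgt :: "'e \<Rightarrow> 'v" and f :: "'e \<Rightarrow> 'a"
  assumes g: "g \<in> carrier G" and B: "homogeneous G f B h"
  shows "cpa_mult (sk_tgt G tgt f) (lift G f g' A) (lift G f g B) =
     (if g' = g \<otimes> h then lift G f g (cpa_mult tgt A B) else (\<lambda>_. 0))"
proof
  fix q :: "('v \<times> 'a) \<times> ('e \<times> 'a) list"
  obtain v g0 ys where q: "q = ((v, g0), ys)" by (metis prod.collapse)
  have summand: "lift G f g' A ((path_end tgt (v, take i xs), lift_end G f g (take i xs)),
          lift_list G f (lift_end G f g (take i xs)) (drop i xs)) * B (v, take i xs)
      = (if g' = g \<otimes> h then A (path_end tgt (v, take i xs), drop i xs) * B (v, take i xs) else 0)"
    for i xs
  proof (cases "B (v, take i xs) = 0")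
    case False
    with B have "lift_end G f g (take i xs) = g \<otimes> h"
      unfolding homogeneous_def by (auto simp: lift_end_eq_mult_path_img g)
    then show ?thesis by (auto simp: lift_apply)
  qed simp
  show "cpa_mult (sk_tgt G tgt f) (lift G f g' A) (lift G f g B) q =
     (if g' = g \<otimes> h then lift G f g (cpa_mult tgt A B) else (\<lambda>_. 0)) q"
    unfolding q cpa_mult_lift_right[OF lifted_support_lift] summand
    by (auto simp: lift_apply cpa_mult_def)
qed

lemma cpa_mult_hat_sum_lift:
  fixes tgt :: "'e \<Rightarrow> 'v" and f :: "'e \<Rightarrow> 'a"
  assumes g: "g \<in> carrier G" and fin: "finite (carrier G)"
    and Y: "\<forall>p. Y p \<noteq> 0 \<longrightarrow> (\<forall>x\<in>set (snd p). f x \<in> carrier G)"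
  shows "cpa_mult (sk_tgt G tgt f) (hat_sum G f W) (lift G f g Y) = lift G f g (cpa_mult tgt W Y)"
proof
  fix q :: "('v \<times> 'a) \<times> ('e \<times> 'a) list"
  obtain v g0 ys where q: "q = ((v, g0), ys)" by (metis prod.collapse)
  have summand: "hat_sum G f W ((path_end tgt (v, take i xs), lift_end G f g (take i xs)),
          lift_list G f (lift_end G f g (take i xs)) (drop i xs)) * Y (v, take i xs)
      = W (path_end tgt (v, take i xs), drop i xs) * Y (v, take i xs)"
    for i xs
  proof (cases "Y (v, take i xs) = 0")
    case False
    with Y g have "lift_end G f g (take i xs) \<in> carrier G"
      by (auto intro: lift_end_closed)
    have "hat_sum G f W ((path_end tgt (v, take i xs), lift_end G f g (take i xs)),
          lift_list G f (lift_end G f g (take i xs)) (drop i xs)) =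
        (\<Sum>k\<in>carrier G. if lift_end G f g (take i xs) = k
           then W (path_end tgt (v, take i xs), drop i xs) else 0)"
      unfolding hat_sum_def by (intro sum.cong) (auto simp: lift_apply)
    also have "\<dots> = W (path_end tgt (v, take i xs), drop i xs)"
      using \<open>lift_end G f g (take i xs) \<in> carrier G\<close> fin by simp
    finally show ?thesis by simp
  qed simp
  show "cpa_mult (sk_tgt G tgt f) (hat_sum G f W) (lift G f g Y) q = lift G f g (cpa_mult tgt W Y) q"
    unfolding q cpa_mult_lift_right[OF lifted_support_hat_sum] summand
    by (auto simp: lift_apply cpa_mult_def)
qed

text \<open>Here invariance of \<open>W\<close> is used: only the sheet \<open>k = g\<close> of \<open>\<hat>W\<close> meets \<open>Y\<^sup>g\<close>.\<close>

lemma cpa_mult_lift_hat_sum: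
  assumes g: "g \<in> carrier G" and fin: "finite (carrier G)" and W: "homogeneous G f W \<one>"
  shows "cpa_mult (sk_tgt G tgt f) (lift G f g Y) (hat_sum G f W) = lift G f g (cpa_mult tgt Y W)"
proof -
  have "cpa_mult (sk_tgt G tgt f) (lift G f g Y) (hat_sum G f W) =
      (\<lambda>q. \<Sum>k\<in>carrier G. cpa_mult (sk_tgt G tgt f) (lift G f g Y) (lift G f k W) q)"
    unfolding hat_sum_def by (rule cpa_mult_sum_right)
  also have "\<dots> = (\<lambda>q. \<Sum>k\<in>carrier G. if g = k then lift G f k (cpa_mult tgt Y W) q else 0)"
    by (intro ext sum.cong refl) (simp add: cpa_mult_lift_lift[OF _ W])
  also have "\<dots> = lift G f g (cpa_mult tgt Y W)"
    using g fin by (intro ext) simp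
  finally show ?thesis .
qed

end

lemma lift_zero: "lift G f g (\<lambda>_. 0) = (\<lambda>_. 0)"
  by (rule ext) (simp add: lift_def)

lemma lift_add: "lift G f g (\<lambda>p. (A p :: 'k::monoid_add) + B p) = (\<lambda>q. lift G f g A q + lift G f g B q)"
  by (rule ext) (simp add: lift_def)

lemma lift_diff:
  "lift G f g (\<lambda>p. (A p :: 'k::ab_group_add) - B p) = (\<lambda>q. lift G f g A q - lift G f g B q)"
  by (rule ext) (simp add: lift_def)

lemma lift_sum:
  "lift G f g (\<lambda>p. \<Sum>k\<in>S. (B k p :: 'k::comm_monoid_add)) = (\<lambda>q. \<Sum>k\<in>S. lift G f g (B k) q)"
  by (rule ext) (auto simp: lift_def)

lemma cpa_sum: "\<forall>k\<in>S. B k \<in> cpa V E src tgt \<Longrightarrow> (\<lambda>p. \<Sum>k\<in>S. B k p) \<in> cpa V E src tgt"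
  by (simp add: cpa_def)

lemma cpa_arrow_labels:
  "A \<in> cpa V E src tgt \<Longrightarrow> \<forall>x\<in>E. f x \<in> carrier G \<Longrightarrow> A p \<noteq> 0 \<Longrightarrow> \<forall>x\<in>set (snd p). f x \<in> carrier G"
  unfolding cpa_def is_path_def by blast

lemma (in monoid) set_lift_list:
  "g \<in> carrier G \<Longrightarrow> set xs \<subseteq> E \<Longrightarrow> \<forall>x\<in>E. f x \<in> carrier G \<Longrightarrow>
     set (lift_list G f g xs) \<subseteq> E \<times> carrier G"
  by (induction xs arbitrary: g) auto

lemma (in monoid) lift_in_cpa:
  assumes fE: "\<forall>x\<in>E. f x \<in> carrier G" and g: "g \<in> carrier G" and A: "A \<in> cpa V E src tgt"
  shows "lift G f g A \<in> cpa (V \<times> carrier G) (E \<times> carrier G) (sk_src src) (sk_tgt G tgt f)"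
  unfolding cpa_def
proof (intro CollectI allI impI)
  fix q
  assume not_path: "\<not> is_path (V \<times> carrier G) (E \<times> carrier G) (sk_src src) (sk_tgt G tgt f) q"
  obtain v g0 ys where q: "q = ((v, g0), ys)" by (metis prod.collapse)
  show "lift G f g A q = 0"
  proof (rule ccontr)
    assume "lift G f g A q \<noteq> 0"
    then have "g0 = g" "ys = lift_list G f g (map fst ys)" "A (v, map fst ys) \<noteq> 0"
      by (auto simp: q lift_apply split: if_splits)
    moreover from \<open>A (v, map fst ys) \<noteq> 0\<close> A have "is_path V E src tgt (v, map fst ys)"
      unfolding cpa_def by auto
    ultimately have "is_path (V \<times> carrier G) (E \<times> carrier G) (sk_src src) (sk_tgt G tgt f) q"
      using set_lift_list[OF g _ fE, of "map fst ys"] chain_lift_list[of src G tgt f v g "map fst ys"] g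
      by (auto simp: is_path_def q)
    with not_path show False by simp
  qed
qed

lemma closed_ideal_zero: "(\<lambda>_. 0) \<in> closed_ideal V E src tgt S"
  unfolding closed_ideal_def cpa_def by (auto intro: gen_ideal.zero)

lemma closed_ideal_add:
  assumes X: "X \<in> closed_ideal V E src tgt S" and Y: "Y \<in> closed_ideal V E src tgt S"
  shows "(\<lambda>p. X p + Y p) \<in> closed_ideal V E src tgt S"
  unfolding closed_ideal_def
proof (intro CollectI conjI allI)
  show "(\<lambda>p. X p + Y p) \<in> cpa V E src tgt"
    using X Y by (simp add: closed_ideal_def cpa_def)
  fix n
  obtain X' where "X' \<in> gen_ideal V E src tgt S" "\<forall>p. length (snd p) < n \<longrightarrow> X p = X' p"
    using X unfolding closed_ideal_def by blast
  moreover obtain Y' where "Y' \<in> gen_ideal V E src tgt S" "\<forall>p. length (snd p) < n \<longrightarrow> Y p = Y' p"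
    using Y unfolding closed_ideal_def by blast
  ultimately show "\<exists>Z\<in>gen_ideal V E src tgt S. \<forall>p. length (snd p) < n \<longrightarrow> X p + Y p = Z p"
    by (intro bexI[of _ "\<lambda>p. X' p + Y' p"]) (auto intro: gen_ideal.add)
qed

lemma closed_ideal_sum:
  "finite T \<Longrightarrow> \<forall>k\<in>T. B k \<in> closed_ideal V E src tgt S \<Longrightarrow>
     (\<lambda>p. \<Sum>k\<in>T. B k p) \<in> closed_ideal V E src tgt S"
  by (induction T rule: finite_induct) (simp_all add: closed_ideal_zero closed_ideal_add)

lemma gen_ideal_sum:
  "finite T \<Longrightarrow> \<forall>k\<in>T. B k \<in> gen_ideal V E src tgt S \<Longrightarrow>
     (\<lambda>p. \<Sum>k\<in>T. B k p) \<in> gen_ideal V E src tgt S"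
  by (induction T rule: finite_induct) (simp_all add: gen_ideal.zero gen_ideal.add)

definition homogeneous_part ::
    "('g, 'b) monoid_scheme \<Rightarrow> ('a \<Rightarrow> 'g) \<Rightarrow> 'g \<Rightarrow> ('v \<times> 'a list \<Rightarrow> 'k::zero) \<Rightarrow> 'v \<times> 'a list \<Rightarrow> 'k" where
  "homogeneous_part G f h B = (\<lambda>p. if path_img G f (snd p) = h then B p else 0)"

lemma homogeneous_part_homogeneous:
  "\<forall>p. B p \<noteq> 0 \<longrightarrow> (\<forall>x\<in>set (snd p). f x \<in> carrier G) \<Longrightarrow>
     homogeneous G f (homogeneous_part G f h B) h"
  by (simp add: homogeneous_def homogeneous_part_def)

lemma homogeneous_part_cpa: "B \<in> cpa V E src tgt \<Longrightarrow> homogeneous_part G f h B \<in> cpa V E src tgt"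
  by (simp add: cpa_def homogeneous_part_def)

context monoid
begin

lemma sum_homogeneous_part:
  assumes "finite (carrier G)" and "\<forall>p. B p \<noteq> 0 \<longrightarrow> (\<forall>x\<in>set (snd p). f x \<in> carrier G)"
  shows "B = (\<lambda>p. \<Sum>h\<in>carrier G. homogeneous_part G f h B p)"
proof
  fix p
  have "B p \<noteq> 0 \<Longrightarrow> path_img G f (snd p) \<in> carrier G"
    using assms(2) by (blast intro: path_img_closed)
  with assms(1) show "B p = (\<Sum>h\<in>carrier G. homogeneous_part G f h B p)"
    unfolding homogeneous_part_def by (cases "B p = 0") (simp_all add: sum.delta')
qed

lemma homogeneous_cpa_mult:
  assumes r: "homogeneous G f r k" and b: "homogeneous G f b h"
  shows "homogeneous G f (cpa_mult tgt r b) (h \<otimes> k)"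
  unfolding homogeneous_def
proof (intro allI impI)
  fix p
  assume "cpa_mult tgt r b p \<noteq> 0"
  then obtain i where
    "r (path_end tgt (fst p, take i (snd p)), drop i (snd p)) * b (fst p, take i (snd p)) \<noteq> 0"
    unfolding cpa_mult_def by (meson sum.neutral)
  then have "r (path_end tgt (fst p, take i (snd p)), drop i (snd p)) \<noteq> 0" "b (fst p, take i (snd p)) \<noteq> 0"
    by auto
  with r b have
    drop: "\<forall>x\<in>set (drop i (snd p)). f x \<in> carrier G" "path_img G f (drop i (snd p)) = k" and
    take: "\<forall>x\<in>set (take i (snd p)). f x \<in> carrier G" "path_img G f (take i (snd p)) = h"
    unfolding homogeneous_def by auto
  then have "\<forall>x\<in>set (snd p). f x \<in> carrier G"
    by (metis append_take_drop_id Un_iff set_append)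
  moreover have "path_img G f (snd p) = h \<otimes> k"
    using path_img_append[OF take(1) drop(1)] take(2) drop(2) by simp
  ultimately show "(\<forall>x\<in>set (snd p). f x \<in> carrier G) \<and> path_img G f (snd p) = h \<otimes> k"
    by simp
qed

lemma lift_gen_ideal:
  assumes fin: "finite (carrier G)" and fE: "\<forall>x\<in>E. f x \<in> carrier G"
    and S: "\<forall>r\<in>S. \<exists>k\<in>carrier G. homogeneous G f r k"
  shows "x \<in> gen_ideal V E src tgt S \<Longrightarrow> g \<in> carrier G \<Longrightarrow>
     lift G f g x \<in> gen_ideal (V \<times> carrier G) (E \<times> carrier G) (sk_src src) (sk_tgt G tgt f)
        {lift G f g r | g r. g \<in> carrier G \<and> r \<in> S}"
proof (induction x arbitrary: g rule: gen_ideal.induct)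
  case zero
  then show ?case by (simp add: lift_zero gen_ideal.zero)
next
  case (add x y)
  then show ?case by (simp add: lift_add gen_ideal.add)
next
  case (gen r a b)
  note g = gen.prems
  obtain k where k: "k \<in> carrier G" and r: "homogeneous G f r k"
    using S gen.hyps(1) by blast
  define b' where "b' h = homogeneous_part G f h b" for h
  have b_labels: "\<forall>p. b p \<noteq> 0 \<longrightarrow> (\<forall>x\<in>set (snd p). f x \<in> carrier G)"
    using cpa_arrow_labels[OF gen.hyps(3) fE] by blast
  have b': "homogeneous G f (b' h) h" for h
    unfolding b'_def by (rule homogeneous_part_homogeneous[OF b_labels])
  have "lift G f g (cpa_mult tgt a (cpa_mult tgt r b)) =
      (\<lambda>q. \<Sum>h\<in>carrier G. lift G f g (cpa_mult tgt a (cpa_mult tgt r (b' h))) q)"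
    by (subst sum_homogeneous_part[OF fin b_labels]) (simp add: b'_def cpa_mult_sum_right lift_sum)
  also have "\<dots> = (\<lambda>q. \<Sum>h\<in>carrier G. cpa_mult (sk_tgt G tgt f) (lift G f (g \<otimes> (h \<otimes> k)) a)
        (cpa_mult (sk_tgt G tgt f) (lift G f (g \<otimes> h) r) (lift G f g (b' h))) q)"
    by (simp add: cpa_mult_lift_lift[OF g b'] cpa_mult_lift_lift[OF g homogeneous_cpa_mult[OF r b']])
  finally have decomposition: "lift G f g (cpa_mult tgt a (cpa_mult tgt r b)) = \<dots>" .
  have "cpa_mult (sk_tgt G tgt f) (lift G f (g \<otimes> (h \<otimes> k)) a)
        (cpa_mult (sk_tgt G tgt f) (lift G f (g \<otimes> h) r) (lift G f g (b' h))) \<in>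
      gen_ideal (V \<times> carrier G) (E \<times> carrier G) (sk_src src) (sk_tgt G tgt f)
        {lift G f g r | g r. g \<in> carrier G \<and> r \<in> S}"
    if h: "h \<in> carrier G" for h
  proof (rule gen_ideal.gen)
    show "lift G f (g \<otimes> h) r \<in> {lift G f g r | g r. g \<in> carrier G \<and> r \<in> S}"
      using g h gen.hyps(1) by blast
    show "lift G f (g \<otimes> (h \<otimes> k)) a \<in> cpa (V \<times> carrier G) (E \<times> carrier G) (sk_src src) (sk_tgt G tgt f)"
      using g h k by (intro lift_in_cpa[OF fE _ gen.hyps(2)]) simp
    show "lift G f g (b' h) \<in> cpa (V \<times> carrier G) (E \<times> carrier G) (sk_src src) (sk_tgt G tgt f)"
      unfolding b'_def by (intro lift_in_cpa[OF fE g] homogeneous_part_cpa gen.hyps(3))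
  qed
  then show ?case
    unfolding decomposition by (intro gen_ideal_sum[OF fin] ballI)
qed

lemma lift_closed_ideal:
  assumes fin: "finite (carrier G)" and fE: "\<forall>x\<in>E. f x \<in> carrier G"
    and S: "\<forall>r\<in>S. \<exists>k\<in>carrier G. homogeneous G f r k"
    and X: "X \<in> closed_ideal V E src tgt S" and g: "g \<in> carrier G"
  shows "lift G f g X \<in> closed_ideal (V \<times> carrier G) (E \<times> carrier G) (sk_src src) (sk_tgt G tgt f)
      {lift G f g r | g r. g \<in> carrier G \<and> r \<in> S}"
  unfolding closed_ideal_def
proof (intro CollectI conjI allI)
  show "lift G f g X \<in> cpa (V \<times> carrier G) (E \<times> carrier G) (sk_src src) (sk_tgt G tgt f)"
    using X lift_in_cpa[OF fE g] unfolding closed_ideal_def by blast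
  fix n
  obtain Y where "Y \<in> gen_ideal V E src tgt S" and Y: "\<forall>p. length (snd p) < n \<longrightarrow> X p = Y p"
    using X unfolding closed_ideal_def by blast
  then have "lift G f g Y \<in> gen_ideal (V \<times> carrier G) (E \<times> carrier G) (sk_src src) (sk_tgt G tgt f)
      {lift G f g r | g r. g \<in> carrier G \<and> r \<in> S}"
    using lift_gen_ideal[OF fin fE S] g by blast
  moreover have "\<forall>q. length (snd q) < n \<longrightarrow> lift G f g X q = lift G f g Y q"
    using Y by (simp add: lift_def)
  ultimately show "\<exists>Z\<in>gen_ideal (V \<times> carrier G) (E \<times> carrier G) (sk_src src) (sk_tgt G tgt f)
      {lift G f g r | g r. g \<in> carrier G \<and> r \<in> S}. \<forall>q. length (snd q) < n \<longrightarrow> lift G f g X q = Z q"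
    by blast
qed

end

lemma cpa_homogeneousI:
  "A \<in> cpa V E src tgt \<Longrightarrow> \<forall>x\<in>E. f x \<in> carrier G \<Longrightarrow>
     \<forall>p. A p \<noteq> 0 \<longrightarrow> path_img G f (snd p) = h \<Longrightarrow> homogeneous G f A h"
  unfolding homogeneous_def using cpa_arrow_labels by blast

definition unlift ::
    "('g, 'b) monoid_scheme \<Rightarrow> ('a \<Rightarrow> 'g) \<Rightarrow> 'g \<Rightarrow> (('v \<times> 'g) \<times> ('a \<times> 'g) list \<Rightarrow> 'k)
       \<Rightarrow> 'v \<times> 'a list \<Rightarrow> 'k" where
  "unlift G f g X = (\<lambda>p. X ((fst p, g), lift_list G f g (snd p)))"

lemma unlift_cpa:
  assumes X: "X \<in> cpa (V \<times> carrier G) (E \<times> carrier G) (sk_src src) (sk_tgt G tgt f)"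
  shows "unlift G f g X \<in> cpa V E src tgt"
  unfolding cpa_def unlift_def
proof (intro CollectI allI impI)
  fix p
  assume not_path: "\<not> is_path V E src tgt p"
  show "X ((fst p, g), lift_list G f g (snd p)) = 0"
  proof (rule ccontr)
    assume "X ((fst p, g), lift_list G f g (snd p)) \<noteq> 0"
    with X have path: "is_path (V \<times> carrier G) (E \<times> carrier G) (sk_src src) (sk_tgt G tgt f)
        ((fst p, g), lift_list G f g (snd p))"
      unfolding cpa_def by blast
    then have "fst ` set (lift_list G f g (snd p)) \<subseteq> E"
      unfolding is_path_def by auto
    then have "set (snd p) \<subseteq> E"
      by (metis map_fst_lift_list set_map)
    with path have "is_path V E src tgt p"
      unfolding is_path_def by (auto simp: chain_lift_list)
    with not_path show False by simp
  qed
qed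

lemma sum_lift_unlift:
  fixes G :: "('g, 'b) monoid_scheme" and src tgt :: "'a \<Rightarrow> 'v"
    and X :: "('v \<times> 'g) \<times> ('a \<times> 'g) list \<Rightarrow> 'k::comm_monoid_add"
  assumes fin: "finite (carrier G)"
    and X: "X \<in> cpa (V \<times> carrier G) (E \<times> carrier G) (sk_src src) (sk_tgt G tgt f)"
  shows "X = (\<lambda>q. \<Sum>g\<in>carrier G. lift G f g (unlift G f g X) q)"
proof
  fix q :: "('v \<times> 'g) \<times> ('a \<times> 'g) list"
  obtain v g0 ys where q: "q = ((v, g0), ys)" by (metis prod.collapse)
  have "(\<Sum>g\<in>carrier G. lift G f g (unlift G f g X) q) =
      (\<Sum>g\<in>carrier G. if g0 = g then (if ys = lift_list G f g0 (map fst ys) then X q else 0) else 0)"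
    by (intro sum.cong refl) (auto simp: q lift_apply unlift_def)
  also have "\<dots> = (if g0 \<in> carrier G \<and> ys = lift_list G f g0 (map fst ys) then X q else 0)"
    using fin by simp
  also have "\<dots> = X q"
  proof (cases "X q = 0")
    case False
    with X have "is_path (V \<times> carrier G) (E \<times> carrier G) (sk_src src) (sk_tgt G tgt f) q"
      unfolding cpa_def by blast
    then show ?thesis
      using chain_imp_lift_list[of src G tgt f v g0 ys] unfolding is_path_def q by auto
  qed simp
  finally show "X q = (\<Sum>g\<in>carrier G. lift G f g (unlift G f g X) q)" by simp
qed

lemma (in monoid) hat_sum_commutator:
  fixes W :: "'v \<times> 'e list \<Rightarrow> 'k::comm_ring_1"
  assumes fin: "finite (carrier G)" and fE: "\<forall>x\<in>E. f x \<in> carrier G"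
    and W: "homogeneous G f W \<one>"
    and X: "X \<in> cpa (V \<times> carrier G) (E \<times> carrier G) (sk_src src) (sk_tgt G tgt f)"
  shows "(\<lambda>q. cpa_mult (sk_tgt G tgt f) (hat_sum G f W) X q - cpa_mult (sk_tgt G tgt f) X (hat_sum G f W) q)
    = (\<lambda>q. \<Sum>g\<in>carrier G. lift G f g
         (\<lambda>p. cpa_mult tgt W (unlift G f g X) p - cpa_mult tgt (unlift G f g X) W p) q)"
proof -
  have labels: "\<forall>p. unlift G f g X p \<noteq> 0 \<longrightarrow> (\<forall>x\<in>set (snd p). f x \<in> carrier G)" for g
    using cpa_arrow_labels[OF unlift_cpa[OF X] fE] by blast
  have "cpa_mult (sk_tgt G tgt f) (hat_sum G f W) X =
      (\<lambda>q. \<Sum>g\<in>carrier G. lift G f g (cpa_mult tgt W (unlift G f g X)) q)"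
    by (subst sum_lift_unlift[OF fin X])
      (simp add: cpa_mult_sum_right cpa_mult_hat_sum_lift[OF _ fin labels])
  moreover have "cpa_mult (sk_tgt G tgt f) X (hat_sum G f W) =
      (\<lambda>q. \<Sum>g\<in>carrier G. lift G f g (cpa_mult tgt (unlift G f g X) W) q)"
    by (subst sum_lift_unlift[OF fin X])
      (simp add: cpa_mult_sum_left cpa_mult_lift_hat_sum[OF _ fin W])
  ultimately show ?thesis
    by (simp add: lift_diff sum_subtractf)
qed

theorem proposition7p9:
  fixes G :: "('g, 'b) monoid_scheme"
    and V :: "'v set" and E :: "'a set" and src tgt :: "'a \<Rightarrow> 'v"
    and f :: "'a \<Rightarrow> 'g" and K :: nat
    and P :: "nat \<Rightarrow> 'v \<times> 'a list \<Rightarrow> 'k::field"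
    and W :: "'v \<times> 'a list \<Rightarrow> 'k"
  assumes "finite V" and "finite E"
    and "src ` E \<subseteq> V" and "tgt ` E \<subseteq> V"
    and "group G" and "finite (carrier G)"
    and "\<forall>l\<in>{1..K}. P l \<in> cpa V E src tgt"
    and "formal_dual_action G E f P K"
    and "W \<in> cpa V E src tgt"
    and "invariant_rep G f W"
    and "central_mod V E src tgt {P l | l. l \<in> {1..K}} W"
  shows "central_mod (V \<times> carrier G) (E \<times> carrier G) (sk_src src) (sk_tgt G tgt f)
           {lift G f g (P l) | g l. g \<in> carrier G \<and> l \<in> {1..K}} (hat_sum G f W)"
proof -
  interpret monoid G using \<open>group G\<close> by (rule group.is_monoid)
  note fin = \<open>finite (carrier G)\<close>
  define S where "S = {P l | l. l \<in> {1..K}}"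
  have fE: "\<forall>x\<in>E. f x \<in> carrier G"
    using \<open>formal_dual_action G E f P K\<close> unfolding formal_dual_action_def by blast
  have S_homogeneous: "\<forall>r\<in>S. \<exists>k\<in>carrier G. homogeneous G f r k"
    using assms(7,8) cpa_homogeneousI[OF _ fE] unfolding S_def formal_dual_action_def by blast
  have W_homogeneous: "homogeneous G f W \<one>\<^bsub>G\<^esub>"
    using assms(9,10) cpa_homogeneousI[OF _ fE] unfolding invariant_rep_def by blast
  have lifted_S: "{lift G f g (P l) | g l. g \<in> carrier G \<and> l \<in> {1..K}} =
      {lift G f g r | g r. g \<in> carrier G \<and> r \<in> S}"
    unfolding S_def by blast
  have "hat_sum G f W \<in> cpa (V \<times> carrier G) (E \<times> carrier G) (sk_src src) (sk_tgt G tgt f)"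
    unfolding hat_sum_def by (intro cpa_sum ballI lift_in_cpa[OF fE _ assms(9)])
  moreover have commutator: "(\<lambda>p. cpa_mult tgt W Y p - cpa_mult tgt Y W p) \<in> closed_ideal V E src tgt S"
    if "Y \<in> cpa V E src tgt" for Y
    using \<open>central_mod V E src tgt {P l | l. l \<in> {1..K}} W\<close> that
    unfolding central_mod_def S_def by blast
  have "(\<lambda>q. cpa_mult (sk_tgt G tgt f) (hat_sum G f W) X q - cpa_mult (sk_tgt G tgt f) X (hat_sum G f W) q)
      \<in> closed_ideal (V \<times> carrier G) (E \<times> carrier G) (sk_src src) (sk_tgt G tgt f)
           {lift G f g r | g r. g \<in> carrier G \<and> r \<in> S}"
    if X: "X \<in> cpa (V \<times> carrier G) (E \<times> carrier G) (sk_src src) (sk_tgt G tgt f)" for X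
    unfolding hat_sum_commutator[OF fin fE W_homogeneous X]
    by (intro closed_ideal_sum[OF fin] ballI lift_closed_ideal[OF fin fE S_homogeneous]
        commutator unlift_cpa[OF X])
  ultimately show ?thesis
    unfolding central_mod_def lifted_S by blast
qed

end
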